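(* Let $p\ge 5$ be a prime and let $N=\frac{1}{0}$ (the north pole) be a vertex of the level $p$ Farey map $\mathcal{M}_3(p)$. Define the finite sequence of vertices $$S=S(p)=\frac{1}{(p-1)/2},\ \frac{1}{(p-3)/2},\ \dots,\ \frac{1}{3},\ \frac{1}{2},\ \frac{2}{3},\ \frac{3}{4},\ \dots,\ \frac{(p-3)/2}{(p-1)/2},$$ i.e. first the terms $\frac{1}{k}$ for $k=\frac{p-1}{2},\frac{p-3}{2},\dots,2$ (decreasing), followed by the terms $\frac{m-1}{m}$ for $m=3,4,\dots,\frac{p-1}{2}$ (increasing). For $k\in\mathbb{Z}$ let $S+k$ denote the sequence obtained by replacing each term $\frac{x}{c}$ of $S$ by $\frac{x}{c}+k:=\frac{x+kc}{c}$. Let $S_2(p)$ be the concatenation $S\,(S+1)\,(S+2)\cdots(S+p-1)$, and let $S_1(p)$ be the sequence $\frac{0}{1},\frac{1}{1},\dots,\frac{p-1}{1}$. Then: (i) every term of $S_2(p)$ is a vertex at graph-theoretic distance exactly $2$ from $N$ in $\mathcal{M}_3(p)$, and every vertex at distance $2$ from $N$ occurs in $S_2(p)$; (ii) $S_2(p)$ is a Farey circuit, i.e. each term is joined by an edge of $\mathcal{M}_3(p)$ to the next term, and the last term is joined by an edge to the first term; (iii) $S_1(p)$ is a Farey circuit of length $p$ consisting of the vertices at distance $1$ from $N$, and $S_2(p)$ has length $p(p-4)$; (iv) $\mathcal{M}_3(p)$ has exactly $\frac{p-1}{2}$ poles.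
   Context: The Farey map $\mathcal{M}_3$ has vertex set $\mathbb{Q}\cup\{\infty\}$ with $\infty=\frac10$, two reduced fractions $\frac ac,\frac bd$ being joined by an edge iff $ad-bc=\pm1$; the modular group $\Gamma=\mathrm{PSL}(2,\mathbb{Z})$ acts on it by Möbius transformations. For $n\ge2$, $\mathcal{M}_3(n)=\mathcal{M}_3/\Gamma(n)$ is the quotient by the principal congruence subgroup $\Gamma(n)$. Concretely, for $p$ prime, the vertices of $\mathcal{M}_3(p)$ are the "Farey fractions" $\frac{a}{c}$ with $a,c\in\mathbb{Z}_p$ not both zero, where $\frac{a}{c}$ and $\frac{-a}{-c}$ denote the same vertex (so $\frac{a}{c}$ is the image of a fraction in $\mathcal{M}_3$ with numerator $\equiv a$ and denominator $\equiv c$ mod $p$), and two vertices $\frac ac,\frac bd$ are joined by an edge iff $ad-bc\equiv\pm1 \pmod p$. The graph-theoretic distance between two vertices is the length of a shortest edge path joining them. A Farey circuit is a sequence $f_1,\dots,f_k$ of vertices with $f_i$ joined by an edge to $f_{i+1}$, indices taken mod $k$ (terms may repeat). A pole is a vertex of the form $\frac{a}{0}$ (with $a\neq 0$). *)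

theory Defs
  imports "HOL-Computational_Algebra.Primes"
begin

text \<open>A vertex of M_3(p): the Farey fraction a/c with a, c taken mod p, identified
  with (-a)/(-c).  Represented as the set of its (at most two) residue representatives.\<close>
definition fvert :: "int \<Rightarrow> int \<Rightarrow> int \<Rightarrow> (int \<times> int) set" where
  "fvert p a c = {(a mod p, c mod p), ((- a) mod p, (- c) mod p)}"

definition fverts :: "int \<Rightarrow> (int \<times> int) set set" where
  "fverts p = {fvert p a c | a c. \<not> (a mod p = 0 \<and> c mod p = 0)}"

definition fadj :: "int \<Rightarrow> (int \<times> int) set \<Rightarrow> (int \<times> int) set \<Rightarrow> bool" where
  "fadj p u v \<longleftrightarrow> u \<in> fverts p \<and> v \<in> fverts p \<and>
     (\<exists>a c b d. u = fvert p a c \<and> v = fvert p b d \<and>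
        ((a * d - b * c) mod p = 1 mod p \<or> (a * d - b * c) mod p = (- 1) mod p))"

definition fwalk :: "int \<Rightarrow> nat \<Rightarrow> (int \<times> int) set \<Rightarrow> (int \<times> int) set \<Rightarrow> bool" where
  "fwalk p n u v \<longleftrightarrow> (\<exists>xs. length xs = Suc n \<and> set xs \<subseteq> fverts p \<and> hd xs = u \<and> last xs = v
       \<and> (\<forall>i < n. fadj p (xs ! i) (xs ! Suc i)))"

definition fdist_is :: "int \<Rightarrow> (int \<times> int) set \<Rightarrow> (int \<times> int) set \<Rightarrow> nat \<Rightarrow> bool" where
  "fdist_is p u v n \<longleftrightarrow> fwalk p n u v \<and> (\<forall>m < n. \<not> fwalk p m u v)"

definition farey_circuit :: "int \<Rightarrow> (int \<times> int) set list \<Rightarrow> bool" where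
  "farey_circuit p xs \<longleftrightarrow> xs \<noteq> [] \<and> set xs \<subseteq> fverts p \<and>
     (\<forall>i < length xs. fadj p (xs ! i) (xs ! ((Suc i) mod length xs)))"

definition is_pole :: "int \<Rightarrow> (int \<times> int) set \<Rightarrow> bool" where
  "is_pole p v \<longleftrightarrow> (\<exists>a. a mod p \<noteq> 0 \<and> v = fvert p a 0)"

definition Spairs :: "int \<Rightarrow> (int \<times> int) list" where
  "Spairs p = map (\<lambda>k. (1, k)) (rev [2..(p - 1) div 2]) @ map (\<lambda>m. (m - 1, m)) [3..(p - 1) div 2]"

definition S2 :: "int \<Rightarrow> (int \<times> int) set list" where
  "S2 p = concat (map (\<lambda>k. map (\<lambda>(x, c). fvert p (x + k * c) c) (Spairs p)) [0..p - 1])"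

definition S1 :: "int \<Rightarrow> (int \<times> int) set list" where
  "S1 p = map (\<lambda>a. fvert p a 1) [0..p - 1]"

end

theory Submission
  imports Defs "HOL-Number_Theory.Cong"
begin

text \<open>The neighbours of \<open>N = 1/0\<close> are the fractions \<open>b/1\<close>, since the determinant of
  \<open>1/0\<close> and \<open>x/c\<close> is \<open>c\<close>. Hence \<open>x/c\<close> lies at distance two from \<open>N\<close> exactly when
  \<open>c \<noteq> 0, \<plusminus>1 (mod p)\<close>: then \<open>((x - 1)/c)/1\<close> is a common neighbour, while a common neighbour
  \<open>b/1\<close> of \<open>N\<close> and a pole \<open>x/0\<close> forces \<open>x \<equiv> \<plusminus>1\<close>, i.e. \<open>x/0 = N\<close>. Up to sign every such
  \<open>c\<close> is congruent to some \<open>r \<in> {2..(p - 1)/2}\<close>, and \<open>x/r = (1 + k r)/r\<close> for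
  \<open>k \<equiv> (x - 1)/r\<close>, so these vertices are precisely the terms of \<open>S\<^sub>2(p)\<close>.

  Consecutive terms of \<open>S\<close> have determinant \<open>-1\<close>, which is invariant under the shift
  \<open>x/c \<mapsto> (x + k c)/c\<close>; the last term of \<open>S + k\<close> and the first term of \<open>S + (k + 1)\<close>
  (and of \<open>S + (p - 1)\<close> and \<open>S\<close>) have determinant \<open>\<equiv> 1\<close> because \<open>2 \<cdot> (p - 1)/2 \<equiv> -1\<close>.
  The poles \<open>a/0\<close> correspond to the residues \<open>\<plusminus>a\<close> with \<open>a \<in> {1..(p - 1)/2}\<close>.\<close>

section \<open>Residues modulo p\<close>

lemma cong_uminus_left_iff: "[- a = b] (mod m) \<longleftrightarrow> [a = - b] (mod m)"
  for a b m :: int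
  by (metis cong_minus_minus_iff minus_minus)

lemma not_dvd_one_int: "(p::int) > 1 \<Longrightarrow> \<not> p dvd 1"
  by (auto dest: zdvd_imp_le)

lemma prime_cong_inverse:
  fixes p c :: int
  assumes "prime p" "[c \<noteq> 0] (mod p)"
  obtains c' where "[c * c' = 1] (mod p)"
proof -
  have "coprime c p"
    using assms by (metis cong_0_iff coprime_commute prime_imp_coprime)
  then show ?thesis
    using cong_solve_coprime_int that by blast
qed

lemma cong_pm_representative:
  fixes p c :: int
  assumes "odd p" "p > 0"
  obtains r where "r \<in> {0..(p - 1) div 2}" "[c = r] (mod p) \<or> [c = - r] (mod p)"
proof (cases "c mod p \<le> (p - 1) div 2")
  case True
  then show ?thesis
    using that[of "c mod p"] assms(2) by (simp add: cong_def)
next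
  case False
  have "p = 2 * ((p - 1) div 2) + 1"
    using assms(1) by presburger
  then have "p - c mod p \<in> {0..(p - 1) div 2}"
    using False pos_mod_bound[OF assms(2), of c] by auto
  moreover have "c - - (p - c mod p) = (c - c mod p) + p"
    by simp
  then have "[c = - (p - c mod p)] (mod p)"
    unfolding cong_iff_dvd_diff by (metis dvd_add dvd_minus_mod dvd_refl)
  ultimately show ?thesis
    using that by blast
qed

lemma cong_pm_imp_eq:
  fixes p r s :: int
  assumes "r \<in> {0..(p - 1) div 2}" "s \<in> {0..(p - 1) div 2}" "[r = s] (mod p) \<or> [r = - s] (mod p)"
  shows "r = s"
proof -
  have "2 * ((p - 1) div 2) \<le> p - 1"
    by presburger
  then have bounds: "0 \<le> r" "0 \<le> s" "r + s < p"
    using assms(1,2) by auto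
  show "r = s"
    using assms(3)
  proof
    assume "[r = s] (mod p)"
    then show "r = s"
      using bounds by (intro cong_less_imp_eq_int) auto
  next
    assume "[r = - s] (mod p)"
    then have "[r + s = 0] (mod p)"
      by (simp add: cong_iff_dvd_diff)
    then have "r + s = 0"
      using bounds by (intro cong_less_imp_eq_int) auto
    then show "r = s"
      using bounds by simp
  qed
qed

lemma not_cong_0_if_half_range:
  fixes p c :: int
  assumes "c \<in> {1..(p - 1) div 2}"
  shows "[c \<noteq> 0] (mod p)"
proof
  assume "[c = 0] (mod p)"
  moreover have "0 \<in> {0..(p - 1) div 2}"
    using assms by auto
  ultimately have "c = 0"
    using assms by (intro cong_pm_imp_eq[of c p 0]) auto
  with assms show False
    by simp
qed

lemma not_cong_0_1_minus_1_iff: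
  fixes p c :: int
  assumes "odd p" "p > 0"
  shows "[c \<noteq> 0] (mod p) \<and> [c \<noteq> 1] (mod p) \<and> [c \<noteq> - 1] (mod p) \<longleftrightarrow>
    (\<exists>r \<in> {2..(p - 1) div 2}. [c = r] (mod p) \<or> [c = - r] (mod p))"
proof
  assume c: "[c \<noteq> 0] (mod p) \<and> [c \<noteq> 1] (mod p) \<and> [c \<noteq> - 1] (mod p)"
  obtain r where r: "r \<in> {0..(p - 1) div 2}" "[c = r] (mod p) \<or> [c = - r] (mod p)"
    using cong_pm_representative[OF assms] .
  with c have "r \<noteq> 0" "r \<noteq> 1"
    by auto
  with r show "\<exists>r \<in> {2..(p - 1) div 2}. [c = r] (mod p) \<or> [c = - r] (mod p)"
    by auto
next
  assume "\<exists>r \<in> {2..(p - 1) div 2}. [c = r] (mod p) \<or> [c = - r] (mod p)"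
  then obtain r where r: "r \<in> {2..(p - 1) div 2}" "[c = r] (mod p) \<or> [c = - r] (mod p)"
    by blast
  then have "[r \<noteq> 0] (mod p)"
    by (intro not_cong_0_if_half_range) auto
  moreover have "r \<in> {0..(p - 1) div 2}" "1 \<in> {0..(p - 1) div 2}"
    using r(1) by auto
  ultimately have "[r \<noteq> 1] (mod p) \<and> [r \<noteq> - 1] (mod p) \<and> [r \<noteq> 0] (mod p)"
    using r(1) cong_pm_imp_eq[of r p 1] by auto
  with r(2) show "[c \<noteq> 0] (mod p) \<and> [c \<noteq> 1] (mod p) \<and> [c \<noteq> - 1] (mod p)"
    by (metis cong_sym cong_trans cong_uminus_left_iff minus_zero)
qed

section \<open>Vertices, edges and distances\<close>

lemma fvert_mod: "fvert p (a mod p) (c mod p) = fvert p a c"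
  unfolding fvert_def by (simp add: mod_minus_eq)

lemma fvert_uminus: "fvert p (- a) (- c) = fvert p a c"
  unfolding fvert_def by auto

lemma fvert_eq_iff:
  "fvert p a c = fvert p b d \<longleftrightarrow>
     [a = b] (mod p) \<and> [c = d] (mod p) \<or> [- a = b] (mod p) \<and> [- c = d] (mod p)"
proof
  assume "fvert p a c = fvert p b d"
  then have "(b mod p, d mod p) \<in> fvert p a c"
    unfolding fvert_def by (metis insertI1)
  then show "[a = b] (mod p) \<and> [c = d] (mod p) \<or> [- a = b] (mod p) \<and> [- c = d] (mod p)"
    unfolding fvert_def cong_def by auto
next
  assume "[a = b] (mod p) \<and> [c = d] (mod p) \<or> [- a = b] (mod p) \<and> [- c = d] (mod p)"
  then show "fvert p a c = fvert p b d"
    by (metis cong_def fvert_mod fvert_uminus)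
qed

lemma fvert_eq_signed:
  assumes "fvert p a c = fvert p b d"
  obtains s where "s = 1 \<or> s = - 1" "[a = s * b] (mod p)" "[c = s * d] (mod p)"
  using assms unfolding fvert_eq_iff
  by (metis cong_minus_minus_iff minus_minus mult_1 mult_minus1)

lemma fvert_in_fverts_iff: "fvert p a c \<in> fverts p \<longleftrightarrow> \<not> (p dvd a \<and> p dvd c)"
proof
  assume "fvert p a c \<in> fverts p"
  then obtain b d where "fvert p a c = fvert p b d" "\<not> (p dvd b \<and> p dvd d)"
    unfolding fverts_def by (auto simp: dvd_eq_mod_eq_0)
  then show "\<not> (p dvd a \<and> p dvd c)"
    by (elim fvert_eq_signed) (auto simp: cong_dvd_iff)
qed (auto simp: fverts_def dvd_eq_mod_eq_0)

lemma fverts_cases: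
  assumes "v \<in> fverts p"
  obtains a c where "v = fvert p a c" "\<not> (p dvd a \<and> p dvd c)"
  using assms unfolding fverts_def by (auto simp: dvd_eq_mod_eq_0)

lemma fadj_fvert_iff:
  "fadj p (fvert p a c) (fvert p b d) \<longleftrightarrow>
     \<not> (p dvd a \<and> p dvd c) \<and> \<not> (p dvd b \<and> p dvd d) \<and>
     ([a * d - b * c = 1] (mod p) \<or> [a * d - b * c = - 1] (mod p))"
proof
  assume "fadj p (fvert p a c) (fvert p b d)"
  then obtain a' c' b' d' where
    reps: "fvert p a c = fvert p a' c'" "fvert p b d = fvert p b' d'" and
    unimodular: "[a' * d' - b' * c' = 1] (mod p) \<or> [a' * d' - b' * c' = - 1] (mod p)" and
    vertices: "fvert p a c \<in> fverts p" "fvert p b d \<in> fverts p"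
    unfolding fadj_def cong_def by blast
  obtain s where s: "s = 1 \<or> s = - 1" "[a = s * a'] (mod p)" "[c = s * c'] (mod p)"
    using reps(1) by (rule fvert_eq_signed)
  obtain t where t: "t = 1 \<or> t = - 1" "[b = t * b'] (mod p)" "[d = t * d'] (mod p)"
    using reps(2) by (rule fvert_eq_signed)
  have "[a * d - b * c = (s * a') * (t * d') - (t * b') * (s * c')] (mod p)"
    using s t by (intro cong_diff cong_mult)
  then have det: "[a * d - b * c = (s * t) * (a' * d' - b' * c')] (mod p)"
    by (simp add: algebra_simps)
  have "s * t = 1 \<or> s * t = - 1"
    using s(1) t(1) by auto
  then have "[a * d - b * c = 1] (mod p) \<or> [a * d - b * c = - 1] (mod p)"
    using unimodular cong_trans[OF det cong_scalar_left] by fastforce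
  then show "\<not> (p dvd a \<and> p dvd c) \<and> \<not> (p dvd b \<and> p dvd d) \<and>
     ([a * d - b * c = 1] (mod p) \<or> [a * d - b * c = - 1] (mod p))"
    using vertices by (simp add: fvert_in_fverts_iff)
qed (auto simp: fadj_def fvert_in_fverts_iff cong_def)

lemma fadj_in_fverts: "fadj p u v \<Longrightarrow> u \<in> fverts p \<and> v \<in> fverts p"
  unfolding fadj_def by blast

lemma fadj_fvert_half_rangeI:
  fixes p :: int
  assumes "c \<in> {1..(p - 1) div 2}" "d \<in> {1..(p - 1) div 2}"
    and "[a * d - b * c = 1] (mod p) \<or> [a * d - b * c = - 1] (mod p)"
  shows "fadj p (fvert p a c) (fvert p b d)"
  using assms not_cong_0_if_half_range[OF assms(1)] not_cong_0_if_half_range[OF assms(2)]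
  by (simp add: fadj_fvert_iff cong_0_iff)

lemma fwalk_0_iff: "fwalk p 0 u v \<longleftrightarrow> u = v \<and> u \<in> fverts p"
  unfolding fwalk_def by (auto simp: length_Suc_conv intro: exI[of _ "[u]"])

lemma fwalk_Suc_iff: "fwalk p (Suc n) u v \<longleftrightarrow> (\<exists>w. fadj p u w \<and> fwalk p n w v)"
proof
  assume "fwalk p (Suc n) u v"
  then obtain ys where ys: "length ys = Suc n" "set (u # ys) \<subseteq> fverts p" "last (u # ys) = v"
    "\<forall>i < Suc n. fadj p ((u # ys) ! i) ((u # ys) ! Suc i)"
    unfolding fwalk_def by (metis length_Suc_conv list.sel(1))
  then have "ys \<noteq> []" by auto
  with ys have "fadj p u (hd ys)"
    by (metis hd_conv_nth nth_Cons_0 nth_Cons_Suc zero_less_Suc)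
  moreover have "fwalk p n (hd ys) v"
    unfolding fwalk_def using ys \<open>ys \<noteq> []\<close> by (intro exI[of _ ys]) auto
  ultimately show "\<exists>w. fadj p u w \<and> fwalk p n w v" by blast
next
  assume "\<exists>w. fadj p u w \<and> fwalk p n w v"
  then obtain ys where "fadj p u (hd ys)" "length ys = Suc n" "set ys \<subseteq> fverts p"
    "last ys = v" "\<forall>i < n. fadj p (ys ! i) (ys ! Suc i)"
    unfolding fwalk_def by blast
  then show "fwalk p (Suc n) u v"
    unfolding fwalk_def
    by (intro exI[of _ "u # ys"]) (auto simp: fadj_in_fverts hd_conv_nth nth_Cons' less_Suc_eq_0_disj)
qed

lemma fwalk_1_iff: "fwalk p 1 u v \<longleftrightarrow> fadj p u v"
  by (simp add: fwalk_Suc_iff fwalk_0_iff) (use fadj_in_fverts in blast)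

lemma fwalk_2_iff: "fwalk p 2 u v \<longleftrightarrow> (\<exists>w. fadj p u w \<and> fadj p w v)"
  by (simp only: numeral_2_eq_2 fwalk_Suc_iff One_nat_def[symmetric] fwalk_1_iff)

lemma fdist_is_1_iff: "fdist_is p u v 1 \<longleftrightarrow> fadj p u v \<and> u \<noteq> v"
  unfolding fdist_is_def fwalk_1_iff using fadj_in_fverts by (auto simp: fwalk_0_iff)

lemma fdist_is_2_iff:
  "fdist_is p u v 2 \<longleftrightarrow> (\<exists>w. fadj p u w \<and> fadj p w v) \<and> \<not> fadj p u v \<and> u \<noteq> v"
proof -
  have "(\<forall>m < 2. \<not> fwalk p m u v) \<longleftrightarrow> \<not> fwalk p 0 u v \<and> \<not> fwalk p 1 u v"
    by (auto simp: numeral_2_eq_2 All_less_Suc)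
  then show ?thesis
    unfolding fdist_is_def fwalk_2_iff fwalk_1_iff fwalk_0_iff using fadj_in_fverts by blast
qed

section \<open>Neighbours of the pole 1/0, and the poles\<close>

lemma fadj_fvert_1_0_iff:
  assumes "(p::int) > 1"
  shows "fadj p (fvert p 1 0) w \<longleftrightarrow> (\<exists>b. w = fvert p b 1)"
proof
  assume adj: "fadj p (fvert p 1 0) w"
  then obtain b d where w: "w = fvert p b d"
    using fadj_in_fverts fverts_cases by blast
  with adj have "[d = 1] (mod p) \<or> [d = - 1] (mod p)"
    by (simp add: fadj_fvert_iff)
  then have "w = fvert p b 1 \<or> w = fvert p (- b) 1"
    unfolding w fvert_eq_iff by (auto simp: cong_uminus_left_iff)
  then show "\<exists>b. w = fvert p b 1" by blast
qed (use assms not_dvd_one_int in \<open>auto simp: fadj_fvert_iff\<close>)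

lemma fadj_fvert_1_0_fvert_iff:
  assumes "(p::int) > 1"
  shows "fadj p (fvert p 1 0) (fvert p x c) \<longleftrightarrow> [c = 1] (mod p) \<or> [c = - 1] (mod p)"
  using not_dvd_one_int[OF assms] by (auto simp: fadj_fvert_iff cong_dvd_iff)

lemma fvert_1_0_ne_fvert_1:
  assumes "(p::int) > 1"
  shows "fvert p 1 0 \<noteq> fvert p b 1"
  using assms not_dvd_one_int by (auto simp: fvert_eq_iff cong_0_iff cong_sym_eq)

lemma fdist_is_1_fvert_1_0_iff:
  assumes "(p::int) > 1"
  shows "fdist_is p (fvert p 1 0) v 1 \<longleftrightarrow> (\<exists>b. v = fvert p b 1)"
  unfolding fdist_is_1_iff fadj_fvert_1_0_iff[OF assms] using fvert_1_0_ne_fvert_1[OF assms] by blast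

lemma fadj_fvert_1_pole_imp_eq:
  assumes "fadj p (fvert p b 1) (fvert p x c)" "[c = 0] (mod p)"
  shows "fvert p x c = fvert p 1 0"
proof -
  have "[b * c - x = b * 0 - x] (mod p)"
    using assms(2) by (intro cong_diff cong_scalar_left cong_refl)
  then have "[b * c - x = - x] (mod p)"
    by simp
  moreover have "[b * c - x = 1] (mod p) \<or> [b * c - x = - 1] (mod p)"
    using assms(1) by (simp add: fadj_fvert_iff)
  ultimately have "[- x = 1] (mod p) \<or> [- x = - 1] (mod p)"
    by (meson cong_sym cong_trans)
  then have "[x = - 1] (mod p) \<or> [x = 1] (mod p)"
    by (simp add: cong_uminus_left_iff)
  with assms(2) show ?thesis
    unfolding fvert_eq_iff by (auto simp: cong_uminus_left_iff)
qed

lemma fadj_fvert_1_inverse: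
  assumes "(p::int) > 1" "[c \<noteq> 0] (mod p)" "[c * c' = 1] (mod p)"
  shows "fadj p (fvert p ((x - 1) * c') 1) (fvert p x c)"
proof -
  have "[(x - 1) * (c * c') - x * 1 = (x - 1) * 1 - x * 1] (mod p)"
    using assms(3) by (intro cong_diff cong_scalar_left cong_refl)
  then have "[(x - 1) * c' * c - x * 1 = - 1] (mod p)"
    by (simp add: algebra_simps)
  then show ?thesis
    using assms(2) not_dvd_one_int[OF assms(1)] by (simp add: fadj_fvert_iff cong_0_iff)
qed

lemma fdist_is_2_fvert_1_0_iff:
  assumes "prime (p::int)"
  shows "fdist_is p (fvert p 1 0) v 2 \<longleftrightarrow>
    (\<exists>x c. v = fvert p x c \<and> [c \<noteq> 0] (mod p) \<and> [c \<noteq> 1] (mod p) \<and> [c \<noteq> - 1] (mod p))"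
    (is "?dist2 \<longleftrightarrow> ?generic")
proof
  have "p > 1"
    using assms prime_gt_1_int by blast
  note adj_iff = fadj_fvert_1_0_fvert_iff[OF \<open>p > 1\<close>]
  show "?dist2 \<Longrightarrow> ?generic"
  proof -
    assume ?dist2
    then obtain b where adj: "fadj p (fvert p b 1) v" and not_adj: "\<not> fadj p (fvert p 1 0) v"
      and ne: "fvert p 1 0 \<noteq> v"
      using \<open>p > 1\<close> by (auto simp: fdist_is_2_iff fadj_fvert_1_0_iff)
    obtain x c where v: "v = fvert p x c"
      using adj fadj_in_fverts fverts_cases by blast
    have "[c \<noteq> 0] (mod p)"
      using adj ne fadj_fvert_1_pole_imp_eq unfolding v by metis
    with not_adj show ?generic
      unfolding v adj_iff by blast
  qed
  show "?generic \<Longrightarrow> ?dist2"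
  proof -
    assume ?generic
    then obtain x c where v: "v = fvert p x c"
      and c: "[c \<noteq> 0] (mod p)" "[c \<noteq> 1] (mod p)" "[c \<noteq> - 1] (mod p)"
      by blast
    obtain c' where "[c * c' = 1] (mod p)"
      using prime_cong_inverse[OF assms c(1)] .
    then have "fadj p (fvert p 1 0) (fvert p ((x - 1) * c') 1)" "fadj p (fvert p ((x - 1) * c') 1) v"
      using \<open>p > 1\<close> c(1) unfolding v by (auto simp: fadj_fvert_1_0_iff fadj_fvert_1_inverse)
    moreover have "\<not> fadj p (fvert p 1 0) v"
      using c(2,3) unfolding v adj_iff by blast
    moreover have "fvert p 1 0 \<noteq> v"
      using c(1) unfolding v fvert_eq_iff by (auto simp: cong_sym_eq)
    ultimately show ?dist2
      unfolding fdist_is_2_iff by blast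
  qed
qed

lemma poles_eq_image:
  fixes p :: int
  assumes "odd p" "p > 0"
  shows "{v \<in> fverts p. is_pole p v} = (\<lambda>a. fvert p a 0) ` {1..(p - 1) div 2}"
proof (intro equalityI subsetI)
  fix v
  assume "v \<in> {v \<in> fverts p. is_pole p v}"
  then obtain a where a: "[a \<noteq> 0] (mod p)" "v = fvert p a 0"
    unfolding is_pole_def by (auto simp: cong_0_iff dvd_eq_mod_eq_0)
  obtain r where r: "r \<in> {0..(p - 1) div 2}" "[a = r] (mod p) \<or> [a = - r] (mod p)"
    using cong_pm_representative[OF assms] .
  with a(1) have "r \<noteq> 0"
    by auto
  moreover have "v = fvert p r 0"
    using r(2) unfolding a(2) fvert_eq_iff by (auto simp: cong_uminus_left_iff)
  ultimately show "v \<in> (\<lambda>a. fvert p a 0) ` {1..(p - 1) div 2}"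
    using r(1) by auto
next
  fix v
  assume "v \<in> (\<lambda>a. fvert p a 0) ` {1..(p - 1) div 2}"
  then obtain a where "a \<in> {1..(p - 1) div 2}" "v = fvert p a 0"
    by blast
  then show "v \<in> {v \<in> fverts p. is_pole p v}"
    using not_cong_0_if_half_range
    by (auto simp: is_pole_def fvert_in_fverts_iff cong_0_iff dvd_eq_mod_eq_0)
qed

lemma inj_on_poles: "inj_on (\<lambda>a. fvert p a 0) {1..(p - 1) div 2}"
proof
  fix a b
  assume "a \<in> {1..(p - 1) div 2}" "b \<in> {1..(p - 1) div 2}" "fvert p a 0 = fvert p b 0"
  then show "a = b"
    by (intro cong_pm_imp_eq[of a p b]) (auto simp: fvert_eq_iff cong_uminus_left_iff)
qed

lemma card_poles:
  fixes p :: int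
  assumes "odd p" "p > 0"
  shows "int (card {v \<in> fverts p. is_pole p v}) = (p - 1) div 2"
  using assms by (simp add: poles_eq_image card_image[OF inj_on_poles])

section \<open>Circuits\<close>

lemma successively_upto:
  fixes i j :: int
  assumes "\<And>k. i \<le> k \<Longrightarrow> k < j \<Longrightarrow> P k (k + 1)"
  shows "successively P [i..j]"
  using assms
proof (induction i j rule: upto.induct)
  case (1 i j)
  show ?case
  proof (cases "i < j")
    case True
    then have "[i..j] = i # [i + 1..j]" "hd [i + 1..j] = i + 1"
      by (simp_all add: upto_rec1)
    with True 1 show ?thesis
      by (simp add: successively_Cons)
  qed (simp add: upto.simps)
qed

lemma hd_upto: "i \<le> j \<Longrightarrow> hd [i..j] = i"
  by (subst upto_rec1) auto

lemma last_upto: "i \<le> j \<Longrightarrow> last [i..j] = j"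
  by (subst upto_rec2) auto

lemma successively_concat_map:
  assumes "\<And>k. k \<in> set ks \<Longrightarrow> f k \<noteq> [] \<and> successively P (f k)"
    and "successively (\<lambda>k l. P (last (f k)) (hd (f l))) ks"
  shows "successively P (concat (map f ks))"
  using assms
proof (induction ks)
  case (Cons k ks)
  show ?case
  proof (cases "ks = []")
    case False
    then have "hd (concat (map f ks)) = hd (f (hd ks))"
      using Cons.prems(1) by (simp add: hd_concat hd_map)
    with False Cons show ?thesis
      by (simp add: successively_append_iff successively_Cons)
  qed (use Cons.prems in simp)
qed simp

lemma last_concat_map:
  "ks \<noteq> [] \<Longrightarrow> f (last ks) \<noteq> [] \<Longrightarrow> last (concat (map f ks)) = last (f (last ks))"
proof (induction ks)
  case (Cons k ks)
  then show ?case
    by (cases "ks = []") (auto simp: last_append)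
qed simp

lemma cyclic_nth_iff_successively:
  assumes "xs \<noteq> []"
  shows "(\<forall>i < length xs. P (xs ! i) (xs ! (Suc i mod length xs))) \<longleftrightarrow>
    successively P xs \<and> P (last xs) (hd xs)"
proof -
  have "(\<forall>i < length xs. P (xs ! i) (xs ! (Suc i mod length xs))) \<longleftrightarrow>
      (\<forall>i. Suc i < length xs \<longrightarrow> P (xs ! i) (xs ! Suc i)) \<and> P (xs ! (length xs - 1)) (xs ! 0)"
  proof (intro iffI conjI allI impI)
    fix i
    assume "\<forall>i < length xs. P (xs ! i) (xs ! (Suc i mod length xs))" "Suc i < length xs"
    then show "P (xs ! i) (xs ! Suc i)"
      by (metis Suc_lessD mod_less)
  next
    assume "\<forall>i < length xs. P (xs ! i) (xs ! (Suc i mod length xs))"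
    then show "P (xs ! (length xs - 1)) (xs ! 0)"
      using assms by (metis One_nat_def Suc_pred diff_less length_greater_0_conv less_one mod_self)
  next
    fix i
    assume chain: "(\<forall>i. Suc i < length xs \<longrightarrow> P (xs ! i) (xs ! Suc i)) \<and> P (xs ! (length xs - 1)) (xs ! 0)"
      and "i < length xs"
    show "P (xs ! i) (xs ! (Suc i mod length xs))"
    proof (cases "Suc i < length xs")
      case False
      with \<open>i < length xs\<close> have "Suc i = length xs"
        by simp
      with chain show ?thesis
        by (metis diff_Suc_1 mod_self)
    qed (use chain in simp)
  qed
  with assms show ?thesis
    by (simp add: successively_conv_nth last_conv_nth hd_conv_nth)
qed

lemma farey_circuit_iff:
  "farey_circuit p xs \<longleftrightarrow> xs \<noteq> [] \<and> successively (fadj p) xs \<and> fadj p (last xs) (hd xs)"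
proof -
  have "set xs \<subseteq> fverts p" if "\<forall>i < length xs. fadj p (xs ! i) (xs ! (Suc i mod length xs))"
    using that fadj_in_fverts by (metis in_set_conv_nth subsetI)
  then show ?thesis
    unfolding farey_circuit_def using cyclic_nth_iff_successively by blast
qed

lemma farey_circuit_concat_mapI:
  assumes "ks \<noteq> []"
    and "\<And>k. k \<in> set ks \<Longrightarrow> f k \<noteq> [] \<and> successively (fadj p) (f k)"
    and "successively (\<lambda>k l. fadj p (last (f k)) (hd (f l))) ks"
    and "fadj p (last (f (last ks))) (hd (f (hd ks)))"
  shows "farey_circuit p (concat (map f ks))"
proof -
  have "f (hd ks) \<noteq> []" "f (last ks) \<noteq> []"
    using assms(1,2) by simp_all
  then have "hd (concat (map f ks)) = hd (f (hd ks))" "last (concat (map f ks)) = last (f (last ks))"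
    "concat (map f ks) \<noteq> []"
    using assms(1) by (auto simp: hd_concat hd_map last_concat_map)
  with assms show ?thesis
    unfolding farey_circuit_iff by (simp add: successively_concat_map)
qed

section \<open>The sequences S1 and S2\<close>

lemma set_S1:
  assumes "(p::int) > 1"
  shows "set (S1 p) = range (\<lambda>a. fvert p a 1)"
proof -
  have "fvert p a 1 \<in> (\<lambda>x. fvert p x 1) ` {0..p - 1}" for a
  proof (rule rev_image_eqI)
    show "a mod p \<in> {0..p - 1}"
      using assms by auto
    show "fvert p a 1 = fvert p (a mod p) 1"
      using fvert_mod[of p a 1] assms by simp
  qed
  then show ?thesis
    unfolding S1_def by auto
qed

lemma sphere_1_eq_set_S1:
  assumes "(p::int) > 1"
  shows "{v \<in> fverts p. fdist_is p (fvert p 1 0) v 1} = set (S1 p)"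
  unfolding set_S1[OF assms] fdist_is_1_fvert_1_0_iff[OF assms]
  using not_dvd_one_int[OF assms] by (auto simp: fvert_in_fverts_iff)

lemma S1_circuit:
  fixes p :: int
  assumes "p > 1"
  shows "farey_circuit p (S1 p)"
proof -
  have adj: "fadj p (fvert p a 1) (fvert p b 1)"
    if "[a - b = 1] (mod p) \<or> [a - b = - 1] (mod p)" for a b
    using that not_dvd_one_int[OF assms] by (simp add: fadj_fvert_iff)
  have "successively (fadj p) (S1 p)"
    unfolding S1_def successively_map by (rule successively_upto) (simp add: adj)
  moreover have "fadj p (fvert p (p - 1) 1) (fvert p 0 1)"
    by (rule adj) (simp add: cong_iff_dvd_diff)
  moreover have "[0..p - 1] \<noteq> []" "hd [0..p - 1] = 0" "last [0..p - 1] = p - 1"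
    using assms by (simp_all add: hd_upto last_upto)
  ultimately show ?thesis
    unfolding farey_circuit_iff S1_def by (simp add: hd_map last_map)
qed

lemma Spairs_denominator: "(x, c) \<in> set (Spairs p) \<Longrightarrow> c \<in> {2..(p - 1) div 2}"
  unfolding Spairs_def by auto

lemma one_Spairs: "c \<in> {2..(p - 1) div 2} \<Longrightarrow> (1, c) \<in> set (Spairs p)"
  unfolding Spairs_def by auto

lemma Spairs_unimodular: "successively (\<lambda>(a, c) (b, d). a * d - b * c = - 1) (Spairs p)"
proof -
  let ?h = "(p - 1) div 2"
  have "successively (\<lambda>(a, c) (b, d). a * d - b * c = - 1) (map (\<lambda>k. (1, k)) (rev [2..?h]))"
    by (simp add: successively_map successively_upto)
  moreover have "successively (\<lambda>(a, c) (b, d). a * d - b * c = - 1) (map (\<lambda>m. (m - 1, m)) [3..?h])"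
    by (simp add: successively_map successively_upto algebra_simps)
  moreover have "last (map (\<lambda>k. (1::int, k)) (rev [2..?h])) = (1, 2)"
    if "[2..?h] \<noteq> []"
    using that by (simp add: last_map last_rev upto_rec1)
  moreover have "hd (map (\<lambda>m. (m - 1, m)) [3..?h]) = (2, 3)"
    if "[3..?h] \<noteq> []"
    using that by (simp add: hd_map upto_rec1)
  ultimately show ?thesis
    unfolding Spairs_def by (auto simp: successively_append_iff)
qed

lemma Spairs_ends:
  assumes "(p - 1) div 2 \<ge> 2"
  shows "Spairs p \<noteq> []" "hd (Spairs p) = (1, (p - 1) div 2)"
    and "last (Spairs p) = ((p - 1) div 2 - 1, (p - 1) div 2)"
proof -
  let ?h = "(p - 1) div 2"
  show "Spairs p \<noteq> []" "hd (Spairs p) = (1, ?h)"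
    using assms unfolding Spairs_def by (simp_all add: hd_map hd_rev upto_rec2)
  show "last (Spairs p) = (?h - 1, ?h)"
  proof (cases "?h = 2")
    case True
    then show ?thesis
      unfolding Spairs_def by simp
  next
    case False
    with assms show ?thesis
      unfolding Spairs_def by (simp add: last_map upto_rec2)
  qed
qed

lemma length_Spairs: "(p - 1) div 2 \<ge> 2 \<Longrightarrow> int (length (Spairs p)) = 2 * ((p - 1) div 2) - 3"
  unfolding Spairs_def by simp

lemma set_S2:
  fixes p :: int
  assumes "prime p"
  shows "set (S2 p) = {fvert p x c | x c. c \<in> {2..(p - 1) div 2}}"
proof (intro equalityI subsetI)
  fix v
  assume "v \<in> set (S2 p)"
  then obtain k x c where "(x, c) \<in> set (Spairs p)" "v = fvert p (x + k * c) c"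
    unfolding S2_def by auto
  then show "v \<in> {fvert p x c | x c. c \<in> {2..(p - 1) div 2}}"
    using Spairs_denominator by blast
next
  fix v
  assume "v \<in> {fvert p x c | x c. c \<in> {2..(p - 1) div 2}}"
  then obtain x c where v: "v = fvert p x c" and c: "c \<in> {2..(p - 1) div 2}"
    by blast
  have "[c \<noteq> 0] (mod p)"
    using c by (intro not_cong_0_if_half_range) auto
  then obtain c' where c': "[c * c' = 1] (mod p)"
    using prime_cong_inverse[OF assms] by blast
  define k where "k = (x - 1) * c' mod p"
  have "p > 0"
    using assms prime_gt_0_int by blast
  then have "k \<in> {0..p - 1}"
    unfolding k_def by simp
  have "[1 + k * c = 1 + (x - 1) * c' * c] (mod p)"
    unfolding k_def by (intro cong_add cong_mult cong_refl) (simp add: cong_def)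
  also have "1 + (x - 1) * c' * c = 1 + (x - 1) * (c * c')"
    by simp
  also have "[1 + (x - 1) * (c * c') = 1 + (x - 1) * 1] (mod p)"
    using c' by (intro cong_add cong_scalar_left cong_refl)
  finally have "v = fvert p (1 + k * c) c"
    unfolding v fvert_eq_iff by (simp add: cong_sym_eq)
  then show "v \<in> set (S2 p)"
    unfolding S2_def using \<open>k \<in> {0..p - 1}\<close> one_Spairs[OF c] by (auto intro!: bexI[of _ k])
qed

lemma fdist_is_2_fvert_1_0_iff_in_S2:
  fixes p :: int
  assumes "prime p" "odd p"
  shows "fdist_is p (fvert p 1 0) v 2 \<longleftrightarrow> v \<in> set (S2 p)"
proof -
  have "p > 0"
    using assms prime_gt_0_int by blast
  have "(\<exists>x c. v = fvert p x c \<and> (\<exists>r \<in> {2..(p - 1) div 2}. [c = r] (mod p) \<or> [c = - r] (mod p)))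
    \<longleftrightarrow> v \<in> {fvert p x c | x c. c \<in> {2..(p - 1) div 2}}"
  proof
    assume "\<exists>x c. v = fvert p x c \<and> (\<exists>r \<in> {2..(p - 1) div 2}. [c = r] (mod p) \<or> [c = - r] (mod p))"
    then obtain x c r where v: "v = fvert p x c" and r: "r \<in> {2..(p - 1) div 2}"
      and c: "[c = r] (mod p) \<or> [c = - r] (mod p)"
      by blast
    from c have "v = fvert p x r \<or> v = fvert p (- x) r"
      unfolding v fvert_eq_iff by (auto simp: cong_uminus_left_iff)
    with r show "v \<in> {fvert p x c | x c. c \<in> {2..(p - 1) div 2}}"
      by blast
  qed (blast intro: cong_refl)
  then show ?thesis
    unfolding fdist_is_2_fvert_1_0_iff[OF assms(1)] set_S2[OF assms(1)]
      not_cong_0_1_minus_1_iff[OF assms(2) \<open>p > 0\<close>] .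
qed

definition S_shift :: "int \<Rightarrow> int \<Rightarrow> (int \<times> int) set list" where
  "S_shift p k = map (\<lambda>(x, c). fvert p (x + k * c) c) (Spairs p)"

lemma S2_eq_concat_S_shift: "S2 p = concat (map (S_shift p) [0..p - 1])"
  unfolding S2_def S_shift_def ..

lemma successively_S_shift: "successively (fadj p) (S_shift p k)"
proof -
  have "successively (\<lambda>(a, c) (b, d). fadj p (fvert p (a + k * c) c) (fvert p (b + k * d) d)) (Spairs p)"
    using Spairs_unimodular
  proof (rule successively_mono, clarify)
    fix a c b d
    assume "(a, c) \<in> set (Spairs p)" "(b, d) \<in> set (Spairs p)" "a * d - b * c = - 1"
    moreover have "(a + k * c) * d - (b + k * d) * c = a * d - b * c"
      by (simp add: algebra_simps)
    ultimately show "fadj p (fvert p (a + k * c) c) (fvert p (b + k * d) d)"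
      by (intro fadj_fvert_half_rangeI) (auto dest: Spairs_denominator)
  qed
  then show ?thesis
    by (simp add: S_shift_def successively_map case_prod_unfold)
qed

lemma S_shift_ends:
  assumes "(p - 1) div 2 \<ge> 2"
  shows "S_shift p k \<noteq> []" "hd (S_shift p k) = fvert p (1 + k * ((p - 1) div 2)) ((p - 1) div 2)"
    and "last (S_shift p k) = fvert p ((p - 1) div 2 - 1 + k * ((p - 1) div 2)) ((p - 1) div 2)"
  using Spairs_ends[OF assms] by (simp_all add: S_shift_def hd_map last_map)

lemma S2_circuit:
  fixes p :: int
  assumes "prime p" "p \<ge> 5"
  shows "farey_circuit p (S2 p)"
proof -
  define h where "h = (p - 1) div 2"
  have "odd p"
    using assms by (simp add: prime_odd_int)
  then have p: "p = 2 * h + 1"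
    unfolding h_def by presburger
  with assms(2) have "h \<ge> 2"
    by simp
  then have h: "h \<in> {1..(p - 1) div 2}"
    by (simp add: h_def)
  note ends = S_shift_ends[of p, folded h_def, OF \<open>h \<ge> 2\<close>]
  \<comment> \<open>\<open>S + k\<close> ends in \<open>(h - 1 + k h)/h\<close> and \<open>S + (k + 1)\<close> starts with \<open>(1 + (k + 1) h)/h\<close>:
    their determinant is \<open>-2h = 1 - p\<close>.\<close>
  have "successively (\<lambda>k l. fadj p (last (S_shift p k)) (hd (S_shift p l))) [0..p - 1]"
  proof (rule successively_upto)
    fix k
    have "(h - 1 + k * h) * h - (1 + (k + 1) * h) * h = 1 + p * (- 1)"
      by (simp add: p algebra_simps)
    then show "fadj p (last (S_shift p k)) (hd (S_shift p (k + 1)))"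
      unfolding ends by (intro fadj_fvert_half_rangeI h) (simp add: cong_iff_dvd_diff)
  qed
  moreover have "fadj p (last (S_shift p (p - 1))) (hd (S_shift p 0))"
  proof -
    have "(h - 1 + (p - 1) * h) * h - (1 + 0 * h) * h = 1 + p * (h * h - 1)"
      by (simp add: p algebra_simps)
    then show ?thesis
      unfolding ends by (intro fadj_fvert_half_rangeI h) (simp add: cong_iff_dvd_diff)
  qed
  ultimately show ?thesis
    unfolding S2_eq_concat_S_shift using assms(2) ends(1)
    by (intro farey_circuit_concat_mapI) (simp_all add: successively_S_shift hd_upto last_upto)
qed

lemma length_S2:
  fixes p :: int
  assumes "prime p" "p \<ge> 5"
  shows "int (length (S2 p)) = p * (p - 4)"
proof -
  have "odd p"
    using assms by (simp add: prime_odd_int)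
  then have "2 * ((p - 1) div 2) = p - 1"
    by presburger
  with assms(2) have "int (length (Spairs p)) = p - 4"
    by (simp add: length_Spairs)
  then show ?thesis
    using assms(2) by (simp add: S2_def length_concat o_def sum_list_triv)
qed

theorem theorem2:
  fixes p :: int
  assumes "prime p" and "p \<ge> 5"
  defines "N \<equiv> fvert p 1 0"
  shows "((\<forall>v \<in> set (S2 p). v \<in> fverts p \<and> fdist_is p N v 2)
       \<and> (\<forall>v \<in> fverts p. fdist_is p N v 2 \<longrightarrow> v \<in> set (S2 p)))
     \<and> farey_circuit p (S2 p)
     \<and> (farey_circuit p (S1 p) \<and> int (length (S1 p)) = p
       \<and> set (S1 p) = {v \<in> fverts p. fdist_is p N v 1}
       \<and> int (length (S2 p)) = p * (p - 4))
     \<and> int (card {v \<in> fverts p. is_pole p v}) = (p - 1) div 2"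
proof -
  have "odd p" "p > 1"
    using assms by (simp_all add: prime_odd_int)
  have sphere_2: "fdist_is p N v 2 \<longleftrightarrow> v \<in> set (S2 p)" for v
    unfolding N_def using assms(1) \<open>odd p\<close> by (rule fdist_is_2_fvert_1_0_iff_in_S2)
  have "fdist_is p N v 2 \<Longrightarrow> v \<in> fverts p" for v
    using fadj_in_fverts by (auto simp: fdist_is_2_iff)
  with sphere_2 have "\<forall>v \<in> set (S2 p). v \<in> fverts p \<and> fdist_is p N v 2"
    by blast
  moreover have "int (length (S1 p)) = p"
    using \<open>p > 1\<close> by (simp add: S1_def)
  ultimately show ?thesis
    using sphere_2 S2_circuit[OF assms(1,2)] S1_circuit[OF \<open>p > 1\<close>] length_S2[OF assms(1,2)]
      sphere_1_eq_set_S1[OF \<open>p > 1\<close>] card_poles[OF \<open>odd p\<close>] \<open>p > 1\<close>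
    unfolding N_def by auto
qed

end
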